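(* There exist metric spaces $(X,p)$, $(Y,d)$ and a multi-valued function $F: X \Rightarrow Y$ such that there is no metric $d_F$ on the set $F[X] = \{F(x) : x\in X\}$ with the property that for every $x \in X$, the single-valued map $x' \mapsto F(x')$ from $(X,p)$ to $(F[X], d_F)$ is continuous at $x$ (in the usual sense) if and only if $F$ is continuous at $x$ as a multi-valued function.
   Context: A multi-valued function $F: X \Rightarrow Y$ assigns to each $x$ a nonempty set $F(x)\subseteq Y$. $F$ is continuous at $x$ (as a multi-valued function) if there is some $y \in F(x)$ such that for every $\varepsilon>0$ there is $\delta>0$ such that for every $x' \in B_p(x,\delta)$ there is $y' \in F(x')$ with $d(y,y')<\varepsilon$. *)

theory Defs
  imports "HOL-Analysis.Analysis"
begin

definition sv_continuous_at ::
  "'a set \<Rightarrow> ('a \<Rightarrow> 'a \<Rightarrow> real) \<Rightarrow> ('b \<Rightarrow> 'b \<Rightarrow> real) \<Rightarrow> ('a \<Rightarrow> 'b) \<Rightarrow> 'a \<Rightarrow> bool" where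
  "sv_continuous_at X p dZ f x \<longleftrightarrow>
     (\<forall>\<epsilon>>0. \<exists>\<delta>>0. \<forall>x'\<in>X. p x x' < \<delta> \<longrightarrow> dZ (f x) (f x') < \<epsilon>)"

definition mv_continuous_at ::
  "'a set \<Rightarrow> ('a \<Rightarrow> 'a \<Rightarrow> real) \<Rightarrow> ('b \<Rightarrow> 'b \<Rightarrow> real) \<Rightarrow> ('a \<Rightarrow> 'b set) \<Rightarrow> 'a \<Rightarrow> bool" where
  "mv_continuous_at X p d F x \<longleftrightarrow>
     (\<exists>y\<in>F x. \<forall>\<epsilon>>0. \<exists>\<delta>>0. \<forall>x'\<in>X. p x x' < \<delta> \<longrightarrow> (\<exists>y'\<in>F x'. d y y' < \<epsilon>))"

end

theory Submission
  imports Defs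
begin

text \<open>Take \<open>F 0 = {0, 1}\<close> and \<open>F x = {0}\<close> otherwise. The selection \<open>0\<close> makes \<open>F\<close>
  continuous at \<open>0\<close> as a multi-valued function, but the set-valued map jumps there: near \<open>0\<close>
  it takes the value \<open>{0}\<close>, a point of \<open>F ` X\<close> at positive distance from \<open>F 0\<close> in any metric.\<close>

lemma mv_continuous_at_common_value:
  assumes "Metric_space Y d" "y \<in> Y" "y \<in> F x" "\<And>x'. x' \<in> X \<Longrightarrow> y \<in> F x'"
  shows "mv_continuous_at X p d F x"
proof -
  have "d y y = 0"
    using Metric_space.mdist_zero[OF assms(1) assms(2)] .
  with assms(3,4) show ?thesis
    unfolding mv_continuous_at_def by (intro bexI[of _ y]) (force intro!: exI[of _ 1])
qed

lemma not_sv_continuous_at_jump: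
  assumes "Metric_space Z dZ" "f a \<in> Z" "b \<in> Z" "f a \<noteq> b"
    and "\<And>\<delta>. \<delta> > 0 \<Longrightarrow> \<exists>x'\<in>X. p a x' < \<delta> \<and> f x' = b"
  shows "\<not> sv_continuous_at X p dZ f a"
proof
  assume cont: "sv_continuous_at X p dZ f a"
  have "dZ (f a) b > 0"
    using Metric_space.mdist_pos_eq[OF assms(1-3)] assms(4) by blast
  then obtain \<delta> where "\<delta> > 0" and near: "\<And>x'. x' \<in> X \<Longrightarrow> p a x' < \<delta> \<Longrightarrow> dZ (f a) (f x') < dZ (f a) b"
    using cont unfolding sv_continuous_at_def by blast
  then obtain x' where "x' \<in> X" "p a x' < \<delta>" "f x' = b"
    using assms(5) by blast
  with near show False by fastforce
qed

theorem corollary2p7: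
  shows "\<exists>(X::real set) (p::real \<Rightarrow> real \<Rightarrow> real) (Y::real set) (d::real \<Rightarrow> real \<Rightarrow> real)
            (F::real \<Rightarrow> real set).
     Metric_space X p \<and> Metric_space Y d \<and>
     (\<forall>x\<in>X. F x \<noteq> {} \<and> F x \<subseteq> Y) \<and>
     \<not> (\<exists>dF :: real set \<Rightarrow> real set \<Rightarrow> real.
           Metric_space (F ` X) dF \<and>
           (\<forall>x\<in>X. sv_continuous_at X p dF F x \<longleftrightarrow> mv_continuous_at X p d F x))"
proof -
  define F :: "real \<Rightarrow> real set" where "F x = (if x = 0 then {0, 1} else {0})" for x
  have real_metric: "Metric_space (UNIV :: real set) dist"
    by (rule Met_TC.Metric_space_axioms)
  have mv: "mv_continuous_at UNIV dist dist F 0"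
    by (rule mv_continuous_at_common_value[OF real_metric, of 0]) (auto simp: F_def)
  have "\<not> sv_continuous_at UNIV dist dF F 0" if "Metric_space (F ` UNIV) dF" for dF
  proof (rule not_sv_continuous_at_jump[OF that, where f = F and a = 0 and b = "F 1"])
    fix \<delta> :: real
    assume "\<delta> > 0"
    then show "\<exists>x'\<in>UNIV. dist 0 x' < \<delta> \<and> F x' = F 1"
      by (intro bexI[of _ "\<delta> / 2"]) (auto simp: F_def)
  qed (auto simp: F_def)
  with mv have "\<not> (\<exists>dF. Metric_space (F ` UNIV) dF \<and>
      (\<forall>x\<in>UNIV. sv_continuous_at UNIV dist dF F x \<longleftrightarrow> mv_continuous_at UNIV dist dist F x))"
    by blast
  moreover have "\<forall>x\<in>UNIV. F x \<noteq> {} \<and> F x \<subseteq> UNIV"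
    by (simp add: F_def)
  ultimately show ?thesis
    using real_metric by blast
qed

end
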